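(* Consider the classical system--heat bath model described in the context, with all standing assumptions of the context. Assume that for each $t>0$ there is a constant $C$ with $\sup_{0\le s\le t}(\mathbb E[|\dot P_s|^2])^{1/2}+\sup_{0\le s\le t}(\mathbb E[|\dot X_s|^2])^{1/2}\le C$, and that $\lambda$ is three times continuously differentiable with $\sup_X\|{\rm D}^2\lambda(X)\|+\sup_X\|{\rm D}^3\lambda(X)\|<\infty$. Then for each $t>0$ there is a constant $C$ such that \[ \sup_{0\le s\le t}\mathbb E\big[|X_s|^2+|P_s|^2+|\dot P_s|^2\big]\le C\big(1+e^{Ct^4}\big). \]
   Context: Setting. Let $N\ge1$, let $\bar n$ be an even positive integer and $n=\bar n^3$; let $T>0$ and $m>0$. The heat bath coordinates $x=(x_j)_{j\in E_{\bar n}}\in\mathbb R^n$ are indexed by the periodic lattice $E_{\bar n}=\{-\bar n/2,\dots,\bar n/2-1\}^3$ (indices modulo $\bar n$), $e_1,e_2,e_3$ the unit lattice vectors. The symmetric positive definite $n\times n$ matrix $\bar V''$ is defined by $\langle \bar V''y,y\rangle=c^2\sum_{i=1}^3\sum_{j}|y_{j+e_i}-y_j|^2+\eta_n^2\sum_{i=1}^3\sum_{j}|y_{j+e_i}|^2$, with $c>0$ independent of $n$ and $\eta_n>0$, $\eta_n\to0$, $n^{1/2}\eta_n\to\infty$ as $n\to\infty$; $\langle u,w\rangle=\sum_ju_j^*w_j$. Let $\lambda:\mathbb R^N\to\mathbb R$ and let $a:\mathbb R^N\to\mathbb R^n$ be affine ($\nabla a$ constant). The coupled system has Hamiltonian $H(X,P,x,p)=\frac{|P|^2}{2}+\frac{|p|^2}{2m}+\lambda(X)+\frac12\langle\bar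 V''(x-a(X)),x-a(X)\rangle$ and $(X_t,P_t,x_t,p_t)$ solves the associated Hamilton equations. Given $(X_0,P_0)$, the initial bath data are independent with $p_0\sim N(0,mT{\rm I})$ and $x_0\sim N(a(X_0),T(\bar V'')^{-1})$. Force derivatives $F'_{\ell,j}:=(\bar V''\partial_{X^\ell}a)_j$ satisfy $\sum_j|F'_{\ell,j}|(1+|j-\hat\ell|^2)=\mathcal O(1)$ as $n\to\infty$ with $\hat\ell={\rm argmin}_j|X_\ell-x_j|$, and $\bar F_{\ell,j}:=\lim_{n\to\infty}F'_{\ell,j}$ exist. With $\beta_\ell(\mathbf r):=\sum_{j\in\mathbb Z^3}\bar F_{\ell,j}e^{-2\pi{\rm i}j\cdot\mathbf r}$ viewed as a function of $\boldsymbol\omega\in[-2c,2c]^3$ via $\omega_i=\sqrt2c\sqrt{1-\cos(2\pi r_i)}\,{\rm sgn}(r_i)$, assume $\beta_\ell$ is twice differentiable in $\boldsymbol\omega$ and vanishes for $|\boldsymbol\omega|>c$. *)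

theory Defs
  imports "HOL-Probability.Probability"
begin

type_synonym site = "int \<times> int \<times> int"

definition lattice :: "nat \<Rightarrow> site set" where
  "lattice nb = (let h = int nb div 2 in {-h..h-1} \<times> {-h..h-1} \<times> {-h..h-1})"

definition wrap :: "nat \<Rightarrow> int \<Rightarrow> int" where
  "wrap nb z = ((z + int nb div 2) mod int nb) - int nb div 2"

definition shift :: "nat \<Rightarrow> nat \<Rightarrow> int \<Rightarrow> site \<Rightarrow> site" where
  "shift nb i s j = (case j of (j1, j2, j3) \<Rightarrow>
     (if i = 1 then (wrap nb (j1 + s), j2, j3)
      else if i = 2 then (j1, wrap nb (j2 + s), j3)
      else (j1, j2, wrap nb (j3 + s))))"

definition Vform :: "nat \<Rightarrow> real \<Rightarrow> real \<Rightarrow> (site \<Rightarrow> real) \<Rightarrow> real" where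
  "Vform nb c eta y = c\<^sup>2 * (\<Sum>i\<in>{1,2,3}. \<Sum>j\<in>lattice nb. (y (shift nb i 1 j) - y j)\<^sup>2)
     + eta\<^sup>2 * (\<Sum>i\<in>{1,2,3}. \<Sum>j\<in>lattice nb. (y (shift nb i 1 j))\<^sup>2)"

text \<open>The symmetric matrix V'' whose quadratic form is Vform, acting on lattice vectors:
  (V'' y)_j = c^2 sum_i (2 y_j - y_{j+e_i} - y_{j-e_i}) + 3 eta^2 y_j.\<close>
definition Vop :: "nat \<Rightarrow> real \<Rightarrow> real \<Rightarrow> (site \<Rightarrow> real) \<Rightarrow> site \<Rightarrow> real" where
  "Vop nb c eta y j = c\<^sup>2 * (\<Sum>i\<in>{1,2,3}. 2 * y j - y (shift nb i 1 j) - y (shift nb i (-1) j))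
     + 3 * eta\<^sup>2 * y j"

text \<open>Non-degenerate Gaussian on R^S given by the (positive definite) quadratic form
  Q(y) = <Sigma^{-1} (y - mu), y - mu>: density proportional to exp(-Q/2).\<close>
definition gaussian :: "site set \<Rightarrow> ((site \<Rightarrow> real) \<Rightarrow> real) \<Rightarrow> (site \<Rightarrow> real) measure" where
  "gaussian S Q = density (PiM S (\<lambda>_. lborel))
     (\<lambda>y. ennreal (exp (- Q y / 2)) /
          (\<integral>\<^sup>+ z. ennreal (exp (- Q z / 2)) \<partial>PiM S (\<lambda>_. lborel)))"

text \<open>Law of the initial bath data (x_0, p_0): independent,
  x_0 ~ N(a(X_0), T (V'')^{-1}),  p_0 ~ N(0, m T I).\<close>
definition bath_init :: "nat \<Rightarrow> real \<Rightarrow> real \<Rightarrow> real \<Rightarrow> real \<Rightarrow> (site \<Rightarrow> real)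
    \<Rightarrow> ((site \<Rightarrow> real) \<times> (site \<Rightarrow> real)) measure" where
  "bath_init nb c eta T m mu =
     gaussian (lattice nb) (\<lambda>y. Vform nb c eta (\<lambda>j. y j - mu j) / T)
     \<Otimes>\<^sub>M gaussian (lattice nb) (\<lambda>y. (\<Sum>j\<in>lattice nb. (y j)\<^sup>2) / (m * T))"

definition esqrt :: "ennreal \<Rightarrow> ennreal" where
  "esqrt x = (if x = \<infinity> then \<infinity> else ennreal (sqrt (enn2real x)))"

definition omega1 :: "real \<Rightarrow> real \<Rightarrow> real" where
  "omega1 c r = sqrt 2 * c * sqrt (1 - cos (2 * pi * r)) * sgn r"

definition omega :: "real \<Rightarrow> real \<times> real \<times> real \<Rightarrow> real \<times> real \<times> real" where
  "omega c r = (case r of (r1, r2, r3) \<Rightarrow> (omega1 c r1, omega1 c r2, omega1 c r3))"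

definition dotZ :: "site \<Rightarrow> real \<times> real \<times> real \<Rightarrow> real" where
  "dotZ j r = (case j of (j1, j2, j3) \<Rightarrow> case r of (r1, r2, r3) \<Rightarrow>
       of_int j1 * r1 + of_int j2 * r2 + of_int j3 * r3)"

definition sitedist2 :: "site \<Rightarrow> site \<Rightarrow> real" where
  "sitedist2 j l = (case j of (j1, j2, j3) \<Rightarrow> case l of (l1, l2, l3) \<Rightarrow>
       of_int ((j1 - l1)\<^sup>2 + (j2 - l2)\<^sup>2 + (j3 - l3)\<^sup>2))"

definition twice_differentiable_on ::
  "('a::real_normed_vector \<Rightarrow> 'b::real_normed_vector) \<Rightarrow> 'a set \<Rightarrow> bool" where
  "twice_differentiable_on g S \<longleftrightarrow> (\<exists>g' g''.
     (\<forall>w\<in>S. (g has_derivative g' w) (at w within S)) \<and>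
     (\<forall>w\<in>S. \<forall>u. ((\<lambda>v. g' v u) has_derivative g'' w u) (at w within S)))"

end

theory Submission
  imports Defs
begin

text \<open>
For a fixed lattice size the Hamiltonian vector field is globally Lipschitz, because the second
derivative of lambda is bounded. By Gronwall's inequality the flow therefore depends continuously on
the bath initial data (x_0, p_0), so X_s, P_s and dP_s/ds are Borel functions of the initial data and
their second moments make sense. The hypothesis bounds E|dP_s/ds|^2 and E|P_s|^2 = E|dX_s/ds|^2 by
C^2, and |X_s|^2 <= 2|X_0|^2 + 2|X_s - X_0|^2 with E|X_s - X_0|^2 <= s^2 C^2. This last estimate comes
from Riemann sums of the time integral of |P|^2 together with Fatou's lemma, which needs measurability
only at fixed times. Since the Gaussian law of the initial data has total mass at most one, the second
moments stay below 2|X_0|^2 + 2t^2 C^2 + 2C^2 uniformly in the lattice size, a bound dominated by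
C'(1 + exp(C' t^4)).
\<close>

lemma lipschitz_of_bounded_derivative:
  fixes Dl :: "'a::{real_normed_vector,perfect_space} \<Rightarrow> 'a \<Rightarrow> real"
  assumes deriv: "\<And>Y u. ((\<lambda>Z. Dl Z u) has_derivative D2l Y u) (at Y)"
    and bound: "\<And>Y u v. \<bar>D2l Y u v\<bar> \<le> B * norm u * norm v"
  shows "\<bar>Dl Y u - Dl Z u\<bar> \<le> B * norm u * norm (Y - Z)"
proof -
  have "norm (Dl Y u - Dl Z u) \<le> (B * norm u) * norm (Y - Z)"
  proof (rule differentiable_bound[where S = UNIV and f' = "\<lambda>Y. D2l Y u"])
    show "((\<lambda>Z. Dl Z u) has_derivative D2l Y' u) (at Y' within UNIV)" for Y'
      using deriv by simp
    show "onorm (D2l Y' u) \<le> B * norm u" for Y'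
      by (rule onorm_le) (use bound in \<open>auto simp: mult.assoc\<close>)
  qed auto
  then show ?thesis
    by simp
qed

lemma DERIV_norm_power2:
  fixes f :: "real \<Rightarrow> 'a::real_inner"
  assumes "(f has_vector_derivative f') (at t within T)"
  shows "((\<lambda>s. norm (f s)^2) has_real_derivative 2 * (f t \<bullet> f')) (at t within T)"
proof -
  have "((\<lambda>s. f s \<bullet> f s) has_derivative (\<lambda>h. f t \<bullet> (h *\<^sub>R f') + (h *\<^sub>R f') \<bullet> f t)) (at t within T)"
    using assms unfolding has_vector_derivative_def by (intro has_derivative_inner)
  moreover have "(\<lambda>h. f t \<bullet> (h *\<^sub>R f') + (h *\<^sub>R f') \<bullet> f t) = (\<lambda>h. (2 * (f t \<bullet> f')) * h)"
    by (auto simp: inner_commute algebra_simps)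
  ultimately show ?thesis
    unfolding has_field_derivative_def power2_norm_eq_inner by simp
qed

lemma gronwall_exp_bound:
  fixes D :: "real \<Rightarrow> real"
  assumes deriv: "\<And>s. s \<ge> 0 \<Longrightarrow> (D has_real_derivative D' s) (at s within {0..})"
    and rate: "\<And>s. s \<ge> 0 \<Longrightarrow> D' s \<le> L * D s" and t: "t \<ge> 0"
  shows "D t \<le> exp (L * t) * D 0"
proof -
  define \<phi> where "\<phi> s = exp (- L * s) * D s" for s
  have d\<phi>: "(\<phi> has_real_derivative exp (- L * s) * (D' s - L * D s)) (at s within {0..})" if "s \<ge> 0" for s
    unfolding \<phi>_def using deriv[OF that] by (auto intro!: derivative_eq_intros simp: algebra_simps)
  have "\<phi> t \<le> \<phi> 0"
  proof (rule DERIV_nonpos_imp_decreasing_open[OF t])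
    fix s assume s: "0 < s" "s < t"
    have "at s within {0..} = at s"
      by (rule at_within_interior) (use s in simp)
    moreover have "exp (- L * s) * (D' s - L * D s) \<le> 0"
      using rate[of s] s by (simp add: mult_nonneg_nonpos)
    ultimately show "\<exists>y. (\<phi> has_real_derivative y) (at s) \<and> y \<le> 0"
      using d\<phi>[of s] s by auto
  next
    show "continuous_on {0..t} \<phi>"
      by (rule continuous_on_subset[OF DERIV_continuous_on[OF d\<phi>]]) auto
  qed
  then have "exp (- L * t) * D t \<le> D 0"
    unfolding \<phi>_def by simp
  then have "exp (L * t) * (exp (- L * t) * D t) \<le> exp (L * t) * D 0"
    by (intro mult_left_mono) auto
  then show ?thesis
    by (simp add: mult.assoc[symmetric] exp_add[symmetric])
qed

lemma continuous_on_dominated: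
  fixes G :: "'a::t2_space \<Rightarrow> 'b::real_normed_vector"
  assumes "\<And>w0 w. norm (G w - G w0) \<le> d w0 w" and "\<And>w0. (d w0 \<longlongrightarrow> 0) (at w0)"
  shows "continuous_on UNIV G"
proof (rule continuous_at_imp_continuous_on, intro ballI)
  fix w0
  have "((\<lambda>w. G w - G w0) \<longlongrightarrow> 0) (at w0)"
    by (rule Lim_null_comparison[OF _ assms(2)]) (simp add: assms(1))
  then show "isCont G w0"
    unfolding isCont_def by (rule LIM_zero_cancel)
qed

lemma vector_derivative_within_atLeast:
  assumes "(f has_vector_derivative y) (at s within {0..})" and "s \<ge> (0::real)"
  shows "vector_derivative f (at s within {0..}) = y"
proof (rule vector_derivative_within[OF _ assms(1)])
  have "s islimpt {s..s + 1}"
    by simp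
  then have "s islimpt {0..}"
    by (rule islimpt_subset) (use assms(2) in auto)
  then show "at s within {0..} \<noteq> bot"
    by (simp add: trivial_limit_within)
qed

lemma norm_increment_linear_approx_le:
  fixes f g :: "real \<Rightarrow> 'a::real_normed_vector"
  assumes ab: "a \<le> b" and deriv: "\<And>v. v \<in> {a..b} \<Longrightarrow> (f has_vector_derivative g v) (at v within {a..b})"
    and osc: "\<And>v. v \<in> {a..b} \<Longrightarrow> norm (g v - g a) \<le> \<epsilon>"
  shows "norm (f b - f a - (b - a) *\<^sub>R g a) \<le> \<epsilon> * (b - a)"
proof -
  have "norm ((\<lambda>v. f v - v *\<^sub>R g a) b - (\<lambda>v. f v - v *\<^sub>R g a) a) \<le> \<epsilon> * norm (b - a)"
  proof (rule differentiable_bound[where S = "{a..b}" and f' = "\<lambda>v t. t *\<^sub>R (g v - g a)"])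
    fix v assume v: "v \<in> {a..b}"
    have "((\<lambda>v. f v - v *\<^sub>R g a) has_vector_derivative (g v - g a)) (at v within {a..b})"
      using deriv[OF v] by (auto intro!: derivative_eq_intros)
    then show "((\<lambda>v. f v - v *\<^sub>R g a) has_derivative (\<lambda>t. t *\<^sub>R (g v - g a))) (at v within {a..b})"
      unfolding has_vector_derivative_def .
    show "onorm (\<lambda>t. t *\<^sub>R (g v - g a)) \<le> \<epsilon>"
    proof (rule onorm_le)
      fix t :: real
      have "\<bar>t\<bar> * norm (g v - g a) \<le> \<bar>t\<bar> * \<epsilon>"
        using osc[OF v] by (intro mult_left_mono) auto
      then show "norm (t *\<^sub>R (g v - g a)) \<le> \<epsilon> * norm t"
        by (simp add: mult.commute)
    qed
  qed (use ab in auto)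
  then show ?thesis
    using ab by (simp add: algebra_simps)
qed

lemma norm_increment_le_riemann_sum:
  fixes f g :: "real \<Rightarrow> 'a::real_normed_vector"
  assumes n: "n > 0" and s: "s \<ge> 0"
    and deriv: "\<And>v. v \<in> {0..s} \<Longrightarrow> (f has_vector_derivative g v) (at v within {0..s})"
    and osc: "\<And>v v'. v \<in> {0..s} \<Longrightarrow> v' \<in> {0..s} \<Longrightarrow> \<bar>v - v'\<bar> \<le> s / n \<Longrightarrow> norm (g v - g v') \<le> \<epsilon>"
  shows "norm (f s - f 0) \<le> s / n * (\<Sum>i<n. norm (g (s * real i / real n))) + \<epsilon> * s"
proof -
  define h where "h = s / n"
  define u where "u i = s * real i / real n" for i
  have h0: "h \<ge> 0"
    unfolding h_def using s by simp
  have u_step: "u (Suc i) - u i = h" for i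
    unfolding h_def u_def by (simp add: algebra_simps add_divide_distrib)
  have u_in: "u i \<in> {0..s}" if "i \<le> n" for i
  proof -
    have "s * real i \<le> s * real n"
      using that s by (intro mult_left_mono) auto
    then show ?thesis
      unfolding u_def using s n by (simp add: pos_divide_le_eq)
  qed
  have step: "norm (f (u (Suc i)) - f (u i)) \<le> h * norm (g (u i)) + \<epsilon> * h" if i: "i < n" for i
  proof -
    have sub: "{u i..u (Suc i)} \<subseteq> {0..s}"
      using u_in[of i] u_in[of "Suc i"] i by auto
    have "norm (f (u (Suc i)) - f (u i) - h *\<^sub>R g (u i)) \<le> \<epsilon> * h"
    proof (rule norm_increment_linear_approx_le[of "u i" "u (Suc i)", unfolded u_step])
      show "u i \<le> u (Suc i)"
        using u_step[of i] h0 by linarith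
      show "(f has_vector_derivative g v) (at v within {u i..u (Suc i)})" if "v \<in> {u i..u (Suc i)}" for v
        using deriv sub that by (meson has_vector_derivative_within_subset subsetD)
      show "norm (g v - g (u i)) \<le> \<epsilon>" if "v \<in> {u i..u (Suc i)}" for v
        using that sub u_step[of i] by (intro osc) (auto simp: h_def)
    qed
    then show ?thesis
      using norm_triangle_ineq2[of "f (u (Suc i)) - f (u i)" "h *\<^sub>R g (u i)"] h0 by simp
  qed
  have "f s - f 0 = (\<Sum>i<n. f (u (Suc i)) - f (u i))"
    using sum_lessThan_telescope[of "\<lambda>i. f (u i)" n] n unfolding u_def by simp
  then have "norm (f s - f 0) \<le> (\<Sum>i<n. norm (f (u (Suc i)) - f (u i)))"
    by (simp add: norm_sum)
  also have "\<dots> \<le> (\<Sum>i<n. h * norm (g (u i)) + \<epsilon> * h)"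
    by (rule sum_mono) (simp add: step)
  also have "\<dots> = s / n * (\<Sum>i<n. norm (g (s * real i / real n))) + \<epsilon> * s"
    using n unfolding h_def u_def by (simp add: sum.distrib sum_distrib_left)
  finally show ?thesis .
qed

lemma eventually_less_sq_riemann_sum:
  fixes f g :: "real \<Rightarrow> 'a::real_normed_vector"
  assumes s: "s > 0" and deriv: "\<And>v. v \<in> {0..s} \<Longrightarrow> (f has_vector_derivative g v) (at v within {0..s})"
    and cont: "continuous_on {0..s} g" and y: "y < norm (f s - f 0)^2"
  shows "eventually (\<lambda>n. y < s^2 / real n * (\<Sum>i<n. norm (g (s * real i / real n))^2)) sequentially"
proof (cases "y < 0")
  case True
  have "0 \<le> s^2 / real n * (\<Sum>i<n. norm (g (s * real i / real n))^2)" for n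
    by (intro mult_nonneg_nonneg sum_nonneg) auto
  then show ?thesis
    using True by (intro always_eventually allI) (meson less_le_trans)
next
  case False
  define \<epsilon> where "\<epsilon> = (norm (f s - f 0) - sqrt y) / (2 * s)"
  have sqrt_y: "sqrt y < norm (f s - f 0)"
    using real_sqrt_less_mono[OF y] by simp
  then have "\<epsilon> > 0"
    unfolding \<epsilon>_def using s by simp
  moreover have "uniformly_continuous_on {0..s} g"
    by (rule compact_uniformly_continuous[OF cont]) simp
  ultimately obtain \<delta> where \<delta>: "\<delta> > 0" "\<And>v v'. v \<in> {0..s} \<Longrightarrow> v' \<in> {0..s} \<Longrightarrow> dist v v' < \<delta> \<Longrightarrow> dist (g v) (g v') < \<epsilon>"
    unfolding uniformly_continuous_on_def by metis
  show ?thesis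
    using eventually_gt_at_top[of "nat \<lceil>s / \<delta>\<rceil>"]
  proof eventually_elim
    case (elim n)
    let ?R = "s^2 / real n * (\<Sum>i<n. norm (g (s * real i / real n))^2)"
    have n: "n > 0" and "s / \<delta> < n"
      using elim by linarith+
    then have "s / n < \<delta>"
      using \<delta>(1) by (simp add: field_simps)
    then have "norm (f s - f 0) \<le> s / n * (\<Sum>i<n. norm (g (s * real i / real n))) + \<epsilon> * s"
      using \<delta>(2) s by (intro norm_increment_le_riemann_sum[OF n _ deriv])
        (auto simp: dist_norm less_imp_le)
    moreover have "(s / n * (\<Sum>i<n. norm (g (s * real i / real n))))^2 \<le> ?R"
    proof -
      have "(\<Sum>i<n. norm (g (s * real i / real n)))^2 \<le> real n * (\<Sum>i<n. norm (g (s * real i / real n))^2)"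
        using sum_squared_le_sum_of_squares[of "\<lambda>i. norm (g (s * real i / real n))" "{..<n}"]
        by (simp add: mult.commute)
      then have "(s / n)^2 * (\<Sum>i<n. norm (g (s * real i / real n)))^2
          \<le> (s / n)^2 * (real n * (\<Sum>i<n. norm (g (s * real i / real n))^2))"
        by (rule mult_left_mono) simp
      also have "\<dots> = ?R"
        using n by (simp add: power2_eq_square)
      finally show ?thesis
        unfolding power_mult_distrib .
    qed
    then have "s / n * (\<Sum>i<n. norm (g (s * real i / real n))) \<le> sqrt ?R"
      by (rule real_le_rsqrt)
    moreover have "\<epsilon> * s = (norm (f s - f 0) - sqrt y) / 2"
      unfolding \<epsilon>_def using s by simp
    ultimately have "norm (f s - f 0) \<le> sqrt ?R + (norm (f s - f 0) - sqrt y) / 2"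
      by linarith
    then have "sqrt y < sqrt ?R"
      using sqrt_y by argo
    then show ?case
      by simp
  qed
qed

lemma nn_integral_sq_riemann_sum_le:
  fixes G :: "'w \<Rightarrow> real \<Rightarrow> 'a::real_normed_vector"
  assumes s: "s \<ge> 0" and K: "K \<ge> 0"
    and meas: "\<And>v. v \<in> {0..s} \<Longrightarrow> (\<lambda>w. G w v) \<in> borel_measurable M"
    and bound: "\<And>v. v \<in> {0..s} \<Longrightarrow> (\<integral>\<^sup>+ w. ennreal (norm (G w v)^2) \<partial>M) \<le> ennreal K"
  shows "(\<integral>\<^sup>+ w. ennreal (s^2 / real n * (\<Sum>i<n. norm (G w (s * real i / real n))^2)) \<partial>M) \<le> ennreal (s^2 * K)"
proof (cases "n = 0")
  case False
  let ?u = "\<lambda>i. s * real i / real n"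
  have u_in: "?u i \<in> {0..s}" if "i < n" for i
    using that s by (auto simp: field_simps intro!: mult_left_mono)
  have meas_u: "(\<lambda>w. ennreal (norm (G w (?u i))^2)) \<in> borel_measurable M" if "i < n" for i
    using meas[OF u_in[OF that]] by measurable
  have "(\<integral>\<^sup>+ w. ennreal (s^2 / real n * (\<Sum>i<n. norm (G w (?u i))^2)) \<partial>M)
      = (\<integral>\<^sup>+ w. ennreal (s^2 / real n) * (\<Sum>i<n. ennreal (norm (G w (?u i))^2)) \<partial>M)"
    by (intro nn_integral_cong, subst ennreal_mult'') (auto intro: sum_nonneg)
  also have "\<dots> = ennreal (s^2 / real n) * (\<integral>\<^sup>+ w. (\<Sum>i<n. ennreal (norm (G w (?u i))^2)) \<partial>M)"
    by (rule nn_integral_cmult) (use meas_u in auto)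
  also have "\<dots> = ennreal (s^2 / real n) * (\<Sum>i<n. \<integral>\<^sup>+ w. ennreal (norm (G w (?u i))^2) \<partial>M)"
    by (subst nn_integral_sum) (use meas_u in auto)
  also have "\<dots> \<le> ennreal (s^2 / real n) * (\<Sum>i<n. ennreal K)"
    by (intro mult_left_mono sum_mono bound u_in) auto
  also have "\<dots> = ennreal (s^2 / real n) * ennreal (real n * K)"
    using K by (simp add: ennreal_mult'' ennreal_of_nat_eq_real_of_nat)
  also have "\<dots> = ennreal (s^2 / real n * (real n * K))"
    by (rule ennreal_mult''[symmetric]) (use K in simp)
  also have "s^2 / real n * (real n * K) = s^2 * K"
    using False by simp
  finally show ?thesis .
qed simp

lemma nn_integral_norm_increment_sq_le:
  fixes F G :: "'w \<Rightarrow> real \<Rightarrow> 'a::real_normed_vector"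
  assumes s: "s \<ge> 0" and K: "K \<ge> 0"
    and deriv: "\<And>w v. v \<in> {0..s} \<Longrightarrow> (F w has_vector_derivative G w v) (at v within {0..s})"
    and cont: "\<And>w. continuous_on {0..s} (G w)"
    and meas: "\<And>v. v \<in> {0..s} \<Longrightarrow> (\<lambda>w. G w v) \<in> borel_measurable M"
    and bound: "\<And>v. v \<in> {0..s} \<Longrightarrow> (\<integral>\<^sup>+ w. ennreal (norm (G w v)^2) \<partial>M) \<le> ennreal K"
  shows "(\<integral>\<^sup>+ w. ennreal (norm (F w s - F w 0)^2) \<partial>M) \<le> ennreal (s^2 * K)"
proof (cases "s = 0")
  case False
  then have s: "s > 0"
    using s by simp
  define R where "R n w = s^2 / real n * (\<Sum>i<n. norm (G w (s * real i / real n))^2)" for n w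
  have "ennreal (norm (F w s - F w 0)^2) \<le> liminf (\<lambda>n. ennreal (R n w))" for w
    unfolding le_Liminf_iff
  proof (intro allI impI)
    fix y :: ennreal
    assume y: "y < ennreal (norm (F w s - F w 0)^2)"
    then obtain y' where y': "y = ennreal y'" "y' \<ge> 0" "y' < norm (F w s - F w 0)^2"
      by (cases y) (auto simp: ennreal_less_iff)
    have "eventually (\<lambda>n. y' < R n w) sequentially"
      unfolding R_def by (rule eventually_less_sq_riemann_sum[OF s deriv cont y'(3)])
    then show "eventually (\<lambda>n. y < ennreal (R n w)) sequentially"
      by eventually_elim (use y' in \<open>simp add: ennreal_lessI\<close>)
  qed
  then have "(\<integral>\<^sup>+ w. ennreal (norm (F w s - F w 0)^2) \<partial>M) \<le> (\<integral>\<^sup>+ w. liminf (\<lambda>n. ennreal (R n w)) \<partial>M)"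
    by (rule nn_integral_mono)
  also have "\<dots> \<le> liminf (\<lambda>n. \<integral>\<^sup>+ w. ennreal (R n w) \<partial>M)"
  proof (rule nn_integral_liminf)
    fix n
    have "(\<lambda>w. G w (s * real i / real n)) \<in> borel_measurable M" if "i < n" for i
      using that s by (intro meas) (auto simp: field_simps intro!: mult_left_mono)
    then show "(\<lambda>w. ennreal (R n w)) \<in> borel_measurable M"
      unfolding R_def by (intro measurable_compose[OF _ measurable_ennreal] borel_measurable_times
          borel_measurable_sum borel_measurable_power borel_measurable_norm measurable_const) auto
  qed
  also have "\<dots> \<le> limsup (\<lambda>n. \<integral>\<^sup>+ w. ennreal (R n w) \<partial>M)"
    by (rule Liminf_le_Limsup) simp
  also have "\<dots> \<le> ennreal (s^2 * K)"
    unfolding R_def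
    by (intro Limsup_bounded always_eventually allI nn_integral_sq_riemann_sum_le) (use s K meas bound in auto)
  finally show ?thesis .
qed simp

lemma nn_integral_norm_sq_le_of_derivative:
  fixes F G :: "'w \<Rightarrow> real \<Rightarrow> 'a::real_normed_vector"
  assumes space: "emeasure M (space M) \<le> 1" and F0: "\<And>w. F w 0 = c" and s: "s \<ge> 0" and K: "K \<ge> 0"
    and deriv: "\<And>w v. v \<in> {0..s} \<Longrightarrow> (F w has_vector_derivative G w v) (at v within {0..s})"
    and cont: "\<And>w. continuous_on {0..s} (G w)"
    and meas_F: "(\<lambda>w. F w s) \<in> borel_measurable M"
    and meas_G: "\<And>v. v \<in> {0..s} \<Longrightarrow> (\<lambda>w. G w v) \<in> borel_measurable M"
    and bound: "\<And>v. v \<in> {0..s} \<Longrightarrow> (\<integral>\<^sup>+ w. ennreal (norm (G w v)^2) \<partial>M) \<le> ennreal K"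
  shows "(\<integral>\<^sup>+ w. ennreal (norm (F w s)^2) \<partial>M) \<le> ennreal (2 * norm c ^ 2 + 2 * s^2 * K)"
proof -
  have "ennreal (norm (F w s)^2) \<le> ennreal (2 * norm c ^ 2) + 2 * ennreal (norm (F w s - F w 0)^2)" for w
  proof -
    have "norm (F w s) \<le> norm c + norm (F w s - F w 0)"
      using norm_triangle_sub[of "F w s" c] by (simp add: F0)
    then have "norm (F w s)^2 \<le> (norm c + norm (F w s - F w 0))^2"
      by (simp add: power_mono)
    also have "\<dots> \<le> 2 * norm c ^ 2 + 2 * norm (F w s - F w 0)^2"
      using zero_le_power2[of "norm c - norm (F w s - F w 0)"] unfolding power2_sum power2_diff by linarith
    finally have "ennreal (norm (F w s)^2) \<le> ennreal (2 * norm c ^ 2 + 2 * norm (F w s - F w 0)^2)"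
      by (rule ennreal_leI)
    then show ?thesis
      by (simp add: numeral_mult_ennreal)
  qed
  then have "(\<integral>\<^sup>+ w. ennreal (norm (F w s)^2) \<partial>M)
      \<le> (\<integral>\<^sup>+ w. ennreal (2 * norm c ^ 2) + 2 * ennreal (norm (F w s - F w 0)^2) \<partial>M)"
    by (rule nn_integral_mono)
  also have "\<dots> = ennreal (2 * norm c ^ 2) * emeasure M (space M)
      + 2 * (\<integral>\<^sup>+ w. ennreal (norm (F w s - F w 0)^2) \<partial>M)"
  proof -
    have "(\<lambda>y. norm (y - c)^2) \<in> borel_measurable borel"
      by (intro borel_measurable_continuous_onI continuous_intros)
    from measurable_compose[OF meas_F this]
    have "(\<lambda>w. ennreal (norm (F w s - F w 0)^2)) \<in> borel_measurable M"
      unfolding F0 by measurable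
    then show ?thesis
      by (simp add: nn_integral_add nn_integral_cmult)
  qed
  also have "\<dots> \<le> ennreal (2 * norm c ^ 2) * 1 + 2 * ennreal (s^2 * K)"
    by (intro add_mono mult_left_mono space nn_integral_norm_increment_sq_le[OF s K deriv cont meas_G bound]) auto
  also have "\<dots> = ennreal (2 * norm c ^ 2 + 2 * s^2 * K)"
    using K by (simp add: numeral_mult_ennreal mult.assoc)
  finally show ?thesis .
qed

lemma ennreal_divide_self_le_1: "x / x \<le> (1::ennreal)"
proof (cases x)
  case (real r)
  then show ?thesis
    by (cases "r = 0") (auto simp: divide_ennreal)
qed simp

lemma esqrt_le_imp_le_power2:
  assumes "esqrt a \<le> ennreal C"
  shows "a \<le> ennreal (C^2)"
proof (cases a)
  case (real r)
  then have "ennreal (sqrt r) \<le> ennreal \<bar>C\<bar>"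
    using assms order_trans[OF _ ennreal_leI[OF abs_ge_self]] by (simp add: esqrt_def)
  then have "r \<le> \<bar>C\<bar>^2"
    by (intro sqrt_le_D) simp
  then show ?thesis
    using real by (simp add: ennreal_leI)
next
  case top
  then show ?thesis
    using assms by (simp add: esqrt_def top_unique)
qed

section \<open>The lattice operator\<close>

lemma finite_lattice [simp]: "finite (lattice nb)"
  unfolding lattice_def Let_def by auto

lemma shift_in_lattice:
  assumes "j \<in> lattice (2 * k)"
  shows "shift (2 * k) i d j \<in> lattice (2 * k)"
proof -
  have half: "int (2 * k) div 2 = int k"
    by simp
  have "k \<noteq> 0"
    using assms by (auto simp: lattice_def Let_def)
  then have "wrap (2 * k) z \<in> {- int k .. int k - 1}" for z
    unfolding wrap_def by auto
  then show ?thesis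
    using assms unfolding lattice_def shift_def Let_def half
    by (cases j) (auto simp del: of_nat_mult)
qed

lemma Vop_diff: "Vop nb cc e y1 j - Vop nb cc e y2 j = Vop nb cc e (\<lambda>i. y1 i - y2 i) j"
  unfolding Vop_def by (simp add: algebra_simps sum_subtractf)

lemma abs_Vop_le:
  assumes j: "j \<in> lattice (2 * k)" and y: "\<And>i. i \<in> lattice (2 * k) \<Longrightarrow> \<bar>y i\<bar> \<le> K"
  shows "\<bar>Vop (2 * k) cc e y j\<bar> \<le> (12 * cc^2 + 3 * e^2) * K"
proof -
  define L where "L = (\<Sum>i\<in>{1::nat,2,3}. 2 * y j - y (shift (2 * k) i 1 j) - y (shift (2 * k) i (-1) j))"
  have yj: "\<bar>y j\<bar> \<le> K" and y_shift: "\<bar>y (shift (2 * k) i d j)\<bar> \<le> K" for i d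
    using y j shift_in_lattice[OF j] by auto
  have "\<bar>L\<bar> \<le> (\<Sum>i\<in>{1::nat,2,3}. 4 * K)"
    unfolding L_def
  proof (rule order_trans[OF sum_abs], rule sum_mono)
    show "\<bar>2 * y j - y (shift (2 * k) i 1 j) - y (shift (2 * k) i (-1) j)\<bar> \<le> 4 * K" for i
      using yj y_shift[of i 1] y_shift[of i "-1"] by linarith
  qed
  then have L: "\<bar>L\<bar> \<le> 12 * K"
    by simp
  have "\<bar>Vop (2 * k) cc e y j\<bar> \<le> cc^2 * \<bar>L\<bar> + 3 * e^2 * \<bar>y j\<bar>"
    unfolding Vop_def L_def[symmetric] by (rule order_trans[OF abs_triangle_ineq]) (simp add: abs_mult)
  also have "\<dots> \<le> cc^2 * (12 * K) + 3 * e^2 * K"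
    by (intro add_mono mult_left_mono L yj) auto
  finally show ?thesis
    by (simp add: algebra_simps)
qed

section \<open>Lipschitz dependence of the flow on its initial data\<close>

definition bath_displacement ::
    "(site \<Rightarrow> real) \<Rightarrow> ('N::finite \<Rightarrow> site \<Rightarrow> real) \<Rightarrow> real ^ 'N \<Rightarrow> (site \<Rightarrow> real) \<Rightarrow> site \<Rightarrow> real"
  where "bath_displacement a0 Da Xv xv = (\<lambda>i. xv i - (a0 i + (\<Sum>l\<in>UNIV. Xv $ l * Da l i)))"

definition particle_force ::
    "nat \<Rightarrow> real \<Rightarrow> real \<Rightarrow> (real ^ 'N \<Rightarrow> real ^ 'N \<Rightarrow> real) \<Rightarrow> (site \<Rightarrow> real)
      \<Rightarrow> ('N::finite \<Rightarrow> site \<Rightarrow> real) \<Rightarrow> real ^ 'N \<Rightarrow> (site \<Rightarrow> real) \<Rightarrow> real ^ 'N"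
  where "particle_force nb cc e Dl a0 Da Xv xv =
    (\<chi> l. - Dl Xv (axis l 1) + (\<Sum>j\<in>lattice nb. Da l j * Vop nb cc e (bath_displacement a0 Da Xv xv) j))"

definition hamilton_solution ::
    "nat \<Rightarrow> real \<Rightarrow> real \<Rightarrow> real \<Rightarrow> (real ^ 'N \<Rightarrow> real ^ 'N \<Rightarrow> real) \<Rightarrow> (site \<Rightarrow> real)
      \<Rightarrow> ('N::finite \<Rightarrow> site \<Rightarrow> real) \<Rightarrow> (real \<Rightarrow> real ^ 'N) \<Rightarrow> (real \<Rightarrow> real ^ 'N)
      \<Rightarrow> (real \<Rightarrow> site \<Rightarrow> real) \<Rightarrow> (real \<Rightarrow> site \<Rightarrow> real) \<Rightarrow> bool"
  where "hamilton_solution nb cc e m Dl a0 Da X P x p \<longleftrightarrow> (\<forall>t\<ge>0.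
    (X has_vector_derivative P t) (at t within {0..}) \<and>
    (P has_vector_derivative particle_force nb cc e Dl a0 Da (X t) (x t)) (at t within {0..}) \<and>
    (\<forall>j\<in>lattice nb.
      ((\<lambda>s. x s j) has_real_derivative p t j / m) (at t within {0..}) \<and>
      ((\<lambda>s. p s j) has_real_derivative - Vop nb cc e (bath_displacement a0 Da (X t) (x t)) j)
        (at t within {0..})))"

lemma bath_displacement_diff_le:
  fixes Xa Xb :: "real ^ 'N::finite"
  assumes S: "finite S" "i \<in> S" and r: "norm (Xa - Xb) \<le> r" "\<And>i. i \<in> S \<Longrightarrow> \<bar>xa i - xb i\<bar> \<le> r"
  shows "\<bar>bath_displacement a0 Da Xa xa i - bath_displacement a0 Da Xb xb i\<bar>
    \<le> (1 + (\<Sum>i\<in>S. \<Sum>l\<in>UNIV. \<bar>Da l i\<bar>)) * r"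
proof -
  have r0: "r \<ge> 0"
    using r(1) norm_ge_zero order_trans by blast
  have "\<bar>\<Sum>l\<in>UNIV. (Xa - Xb) $ l * Da l i\<bar> \<le> (\<Sum>l\<in>UNIV. r * \<bar>Da l i\<bar>)"
  proof (rule order_trans[OF sum_abs], rule sum_mono)
    show "\<bar>(Xa - Xb) $ l * Da l i\<bar> \<le> r * \<bar>Da l i\<bar>" for l
      using component_le_norm_cart[of "Xa - Xb" l] r(1) by (simp add: abs_mult mult_right_mono)
  qed
  also have "\<dots> \<le> r * (\<Sum>i\<in>S. \<Sum>l\<in>UNIV. \<bar>Da l i\<bar>)"
    unfolding sum_distrib_left[symmetric]
    by (intro mult_left_mono r0 member_le_sum[OF S(2)] sum_nonneg S(1)) auto
  finally have "\<bar>\<Sum>l\<in>UNIV. (Xa - Xb) $ l * Da l i\<bar> \<le> r * (\<Sum>i\<in>S. \<Sum>l\<in>UNIV. \<bar>Da l i\<bar>)" .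
  moreover have "bath_displacement a0 Da Xa xa i - bath_displacement a0 Da Xb xb i
      = (xa i - xb i) - (\<Sum>l\<in>UNIV. (Xa - Xb) $ l * Da l i)"
    unfolding bath_displacement_def by (simp add: algebra_simps sum_subtractf)
  ultimately show ?thesis
    using r(2)[OF S(2)] by (simp add: algebra_simps)
qed

lemma vector_field_lipschitz:
  fixes Da :: "'N::finite \<Rightarrow> site \<Rightarrow> real"
  assumes Dl_lip: "\<And>Y Z u. \<bar>Dl Y u - Dl Z u\<bar> \<le> B * norm u * norm (Y - Z)"
  obtains KF KV where "KF \<ge> 0" "KV \<ge> 0"
    and "\<And>Xa Xb xa xb r. norm (Xa - Xb) \<le> r \<Longrightarrow> (\<And>i. i \<in> lattice (2 * k) \<Longrightarrow> \<bar>xa i - xb i\<bar> \<le> r) \<Longrightarrow>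
      norm (particle_force (2 * k) cc e Dl a0 Da Xa xa - particle_force (2 * k) cc e Dl a0 Da Xb xb) \<le> KF * r"
    and "\<And>Xa Xb xa xb r j. norm (Xa - Xb) \<le> r \<Longrightarrow> (\<And>i. i \<in> lattice (2 * k) \<Longrightarrow> \<bar>xa i - xb i\<bar> \<le> r) \<Longrightarrow>
      j \<in> lattice (2 * k) \<Longrightarrow>
      \<bar>Vop (2 * k) cc e (bath_displacement a0 Da Xa xa) j - Vop (2 * k) cc e (bath_displacement a0 Da Xb xb) j\<bar>
        \<le> KV * r"
proof -
  let ?S = "lattice (2 * k)"
  define KV where "KV = (12 * cc^2 + 3 * e^2) * (1 + (\<Sum>i\<in>?S. \<Sum>l\<in>UNIV. \<bar>Da l i\<bar>))"
  define KF where "KF = (\<Sum>l\<in>UNIV. \<bar>B\<bar> + KV * (\<Sum>j\<in>?S. \<bar>Da l j\<bar>))"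
  have KV0: "KV \<ge> 0"
    unfolding KV_def by (intro mult_nonneg_nonneg add_nonneg_nonneg sum_nonneg) auto
  have KF0: "KF \<ge> 0"
    unfolding KF_def using KV0 by (intro sum_nonneg add_nonneg_nonneg mult_nonneg_nonneg sum_nonneg) auto
  have V: "\<bar>Vop (2 * k) cc e (bath_displacement a0 Da Xa xa) j - Vop (2 * k) cc e (bath_displacement a0 Da Xb xb) j\<bar>
      \<le> KV * r"
    if r: "norm (Xa - Xb) \<le> r" "\<And>i. i \<in> ?S \<Longrightarrow> \<bar>xa i - xb i\<bar> \<le> r" and j: "j \<in> ?S" for Xa Xb xa xb r j
    unfolding Vop_diff KV_def mult.assoc
    by (rule abs_Vop_le[OF j bath_displacement_diff_le[OF finite_lattice _ r]])
  have F: "norm (particle_force (2 * k) cc e Dl a0 Da Xa xa - particle_force (2 * k) cc e Dl a0 Da Xb xb) \<le> KF * r"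
    if r: "norm (Xa - Xb) \<le> r" "\<And>i. i \<in> ?S \<Longrightarrow> \<bar>xa i - xb i\<bar> \<le> r" for Xa Xb xa xb r
  proof -
    let ?dV = "\<lambda>j. Vop (2 * k) cc e (bath_displacement a0 Da Xa xa) j - Vop (2 * k) cc e (bath_displacement a0 Da Xb xb) j"
    have r0: "r \<ge> 0"
      using r(1) norm_ge_zero order_trans by blast
    have "\<bar>(particle_force (2 * k) cc e Dl a0 Da Xa xa - particle_force (2 * k) cc e Dl a0 Da Xb xb) $ l\<bar>
        \<le> (\<bar>B\<bar> + KV * (\<Sum>j\<in>?S. \<bar>Da l j\<bar>)) * r" for l
    proof -
      have "\<bar>Dl Xa (axis l 1) - Dl Xb (axis l 1)\<bar> \<le> \<bar>B\<bar> * r"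
        using Dl_lip[of Xa "axis l 1" Xb] r(1) r0
        by (simp add: order_trans[OF _ mult_mono[OF abs_ge_self r(1)]])
      moreover have "\<bar>\<Sum>j\<in>?S. Da l j * ?dV j\<bar> \<le> (\<Sum>j\<in>?S. \<bar>Da l j\<bar> * (KV * r))"
        by (rule order_trans[OF sum_abs], rule sum_mono) (auto simp: abs_mult intro!: mult_left_mono V r)
      moreover have "(particle_force (2 * k) cc e Dl a0 Da Xa xa - particle_force (2 * k) cc e Dl a0 Da Xb xb) $ l
          = - (Dl Xa (axis l 1) - Dl Xb (axis l 1)) + (\<Sum>j\<in>?S. Da l j * ?dV j)"
        unfolding particle_force_def by (simp add: algebra_simps sum_subtractf)
      ultimately show ?thesis
        by (simp add: algebra_simps sum_distrib_left sum_distrib_right)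
    qed
    then have "(\<Sum>l\<in>UNIV. \<bar>(particle_force (2 * k) cc e Dl a0 Da Xa xa - particle_force (2 * k) cc e Dl a0 Da Xb xb) $ l\<bar>)
        \<le> KF * r"
      unfolding KF_def sum_distrib_right by (rule sum_mono)
    then show ?thesis
      by (rule order_trans[OF norm_le_l1_cart])
  qed
  show thesis
    by (rule that[OF KF0 KV0 F V])
qed

definition state_norm2 ::
    "site set \<Rightarrow> real ^ 'N::finite \<Rightarrow> real ^ 'N \<Rightarrow> (site \<Rightarrow> real) \<Rightarrow> (site \<Rightarrow> real) \<Rightarrow> real"
  where "state_norm2 S Xv Pv xv pv = norm Xv ^ 2 + norm Pv ^ 2 + (\<Sum>j\<in>S. (xv j)^2) + (\<Sum>j\<in>S. (pv j)^2)"

lemma state_norm2_nonneg: "state_norm2 S Xv Pv xv pv \<ge> 0"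
  unfolding state_norm2_def by (intro add_nonneg_nonneg sum_nonneg) auto

lemma components_le_sqrt_state_norm2:
  assumes "finite S"
  shows "norm Xv \<le> sqrt (state_norm2 S Xv Pv xv pv)" "norm Pv \<le> sqrt (state_norm2 S Xv Pv xv pv)"
    and "j \<in> S \<Longrightarrow> \<bar>xv j\<bar> \<le> sqrt (state_norm2 S Xv Pv xv pv)"
    and "j \<in> S \<Longrightarrow> \<bar>pv j\<bar> \<le> sqrt (state_norm2 S Xv Pv xv pv)"
proof -
  have sums: "(\<Sum>j\<in>S. (xv j)^2) \<ge> 0" "(\<Sum>j\<in>S. (pv j)^2) \<ge> 0"
    by (auto intro: sum_nonneg)
  show "norm Xv \<le> sqrt (state_norm2 S Xv Pv xv pv)" "norm Pv \<le> sqrt (state_norm2 S Xv Pv xv pv)"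
    using sums by (auto intro!: real_le_rsqrt simp: state_norm2_def)
  have norms: "norm Xv ^ 2 \<ge> 0" "norm Pv ^ 2 \<ge> 0"
    by simp_all
  show "\<bar>xv j\<bar> \<le> sqrt (state_norm2 S Xv Pv xv pv)" if "j \<in> S"
  proof (rule real_le_rsqrt)
    have "(xv j)^2 \<le> (\<Sum>j\<in>S. (xv j)^2)"
      by (rule member_le_sum[OF that _ assms]) simp
    then show "\<bar>xv j\<bar>^2 \<le> state_norm2 S Xv Pv xv pv"
      using sums norms unfolding state_norm2_def power2_abs by linarith
  qed
  show "\<bar>pv j\<bar> \<le> sqrt (state_norm2 S Xv Pv xv pv)" if "j \<in> S"
  proof (rule real_le_rsqrt)
    have "(pv j)^2 \<le> (\<Sum>j\<in>S. (pv j)^2)"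
      by (rule member_le_sum[OF that _ assms]) simp
    then show "\<bar>pv j\<bar>^2 \<le> state_norm2 S Xv Pv xv pv"
      using sums norms unfolding state_norm2_def power2_abs by linarith
  qed
qed

lemma state_norm2_rate_le:
  fixes dX dP dF :: "real ^ 'N::finite"
  assumes S: "finite S" and m: "m > 0" and KF: "KF \<ge> 0" and KV: "KV \<ge> 0"
    and dF: "norm dF \<le> KF * sqrt (state_norm2 S dX dP dx dp)"
    and dV: "\<And>j. j \<in> S \<Longrightarrow> \<bar>dV j\<bar> \<le> KV * sqrt (state_norm2 S dX dP dx dp)"
  shows "2 * (dX \<bullet> dP) + 2 * (dP \<bullet> dF) + (\<Sum>j\<in>S. 2 * dx j * (dp j / m)) + (\<Sum>j\<in>S. 2 * dp j * (- dV j))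
    \<le> (2 + 2 * KF + 2 * real (card S) / m + 2 * real (card S) * KV) * state_norm2 S dX dP dx dp"
proof -
  define r where "r = sqrt (state_norm2 S dX dP dx dp)"
  have r0: "r \<ge> 0" and rr: "r * r = state_norm2 S dX dP dx dp"
    unfolding r_def using state_norm2_nonneg[of S dX dP dx dp] by auto
  note comp = components_le_sqrt_state_norm2[OF S, where Xv = dX and Pv = dP and xv = dx and pv = dp, folded r_def]
  have "dX \<bullet> dP \<le> r * r"
    by (rule order_trans[OF norm_cauchy_schwarz]) (intro mult_mono comp; simp add: r0)
  moreover have "dP \<bullet> dF \<le> r * (KF * r)"
    by (rule order_trans[OF norm_cauchy_schwarz]) (intro mult_mono comp; use dF r_def r0 in simp)
  moreover have "(\<Sum>j\<in>S. 2 * dx j * (dp j / m)) \<le> (\<Sum>j\<in>S. 2 * (r * r) / m)"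
  proof (rule sum_mono)
    fix j assume j: "j \<in> S"
    have "dx j * dp j \<le> \<bar>dx j\<bar> * \<bar>dp j\<bar>"
      by (metis abs_ge_self abs_mult)
    also have "\<dots> \<le> r * r"
      by (intro mult_mono comp j) (auto simp: r0)
    finally show "2 * dx j * (dp j / m) \<le> 2 * (r * r) / m"
      using m by (simp add: divide_right_mono)
  qed
  moreover have "(\<Sum>j\<in>S. 2 * dp j * (- dV j)) \<le> (\<Sum>j\<in>S. 2 * (r * (KV * r)))"
  proof (rule sum_mono)
    fix j assume j: "j \<in> S"
    have "dp j * (- dV j) \<le> \<bar>dp j\<bar> * \<bar>dV j\<bar>"
      by (metis abs_ge_self abs_minus_cancel abs_mult)
    also have "\<dots> \<le> r * (KV * r)"
      by (intro mult_mono comp j) (use dV j r_def r0 in auto)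
    finally show "2 * dp j * (- dV j) \<le> 2 * (r * (KV * r))"
      by (simp add: algebra_simps)
  qed
  ultimately have "2 * (dX \<bullet> dP) + 2 * (dP \<bullet> dF) + (\<Sum>j\<in>S. 2 * dx j * (dp j / m)) + (\<Sum>j\<in>S. 2 * dp j * (- dV j))
      \<le> 2 * (r * r) + 2 * (r * (KF * r)) + (\<Sum>j\<in>S. 2 * (r * r) / m) + (\<Sum>j\<in>S. 2 * (r * (KV * r)))"
    by linarith
  also have "\<dots> = (2 + 2 * KF + 2 * real (card S) / m + 2 * real (card S) * KV) * state_norm2 S dX dP dx dp"
    unfolding rr[symmetric] by (simp add: algebra_simps)
  finally show ?thesis .
qed

lemma DERIV_state_norm2_solution_diff:
  assumes a: "hamilton_solution nb cc e m Dl a0 Da Xa Pa xa pa"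
    and b: "hamilton_solution nb cc e m Dl a0 Da Xb Pb xb pb" and s: "s \<ge> 0"
  shows "((\<lambda>s. state_norm2 (lattice nb) (Xa s - Xb s) (Pa s - Pb s) (\<lambda>j. xa s j - xb s j) (\<lambda>j. pa s j - pb s j))
    has_real_derivative
      2 * ((Xa s - Xb s) \<bullet> (Pa s - Pb s))
      + 2 * ((Pa s - Pb s) \<bullet> (particle_force nb cc e Dl a0 Da (Xa s) (xa s) - particle_force nb cc e Dl a0 Da (Xb s) (xb s)))
      + (\<Sum>j\<in>lattice nb. 2 * (xa s j - xb s j) * ((pa s j - pb s j) / m))
      + (\<Sum>j\<in>lattice nb. 2 * (pa s j - pb s j) *
          (- (Vop nb cc e (bath_displacement a0 Da (Xa s) (xa s)) j - Vop nb cc e (bath_displacement a0 Da (Xb s) (xb s)) j))))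
    (at s within {0..})"
  unfolding state_norm2_def
proof (intro DERIV_add DERIV_norm_power2 has_vector_derivative_diff DERIV_sum)
  show "(Xa has_vector_derivative Pa s) (at s within {0..})" "(Xb has_vector_derivative Pb s) (at s within {0..})"
    "(Pa has_vector_derivative particle_force nb cc e Dl a0 Da (Xa s) (xa s)) (at s within {0..})"
    "(Pb has_vector_derivative particle_force nb cc e Dl a0 Da (Xb s) (xb s)) (at s within {0..})"
    using a b s by (auto simp: hamilton_solution_def)
  show "((\<lambda>s. (xa s j - xb s j)^2) has_real_derivative 2 * (xa s j - xb s j) * ((pa s j - pb s j) / m))
      (at s within {0..})" if "j \<in> lattice nb" for j
    using a b s that unfolding hamilton_solution_def
    by (auto intro!: derivative_eq_intros simp: diff_divide_distrib)
  show "((\<lambda>s. (pa s j - pb s j)^2) has_real_derivative 2 * (pa s j - pb s j) *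
      (- (Vop nb cc e (bath_displacement a0 Da (Xa s) (xa s)) j - Vop nb cc e (bath_displacement a0 Da (Xb s) (xb s)) j)))
      (at s within {0..})" if "j \<in> lattice nb" for j
    using a b s that unfolding hamilton_solution_def
    by (auto intro!: derivative_eq_intros)
qed

lemma hamilton_solution_stable:
  assumes m: "m > 0" and Dl_lip: "\<And>Y Z u. \<bar>Dl Y u - Dl Z u\<bar> \<le> B * norm u * norm (Y - Z)"
  obtains L where "\<And>Xa Pa xa pa Xb Pb xb pb t.
    hamilton_solution (2 * k) cc e m Dl a0 Da Xa Pa xa pa \<Longrightarrow>
    hamilton_solution (2 * k) cc e m Dl a0 Da Xb Pb xb pb \<Longrightarrow> t \<ge> 0 \<Longrightarrow>
    state_norm2 (lattice (2 * k)) (Xa t - Xb t) (Pa t - Pb t) (\<lambda>j. xa t j - xb t j) (\<lambda>j. pa t j - pb t j)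
      \<le> exp (L * t) * state_norm2 (lattice (2 * k)) (Xa 0 - Xb 0) (Pa 0 - Pb 0)
           (\<lambda>j. xa 0 j - xb 0 j) (\<lambda>j. pa 0 j - pb 0 j)"
proof -
  let ?S = "lattice (2 * k)"
  obtain KF KV where KF: "KF \<ge> 0" and KV: "KV \<ge> 0"
    and F: "\<And>Xa Xb xa xb r. norm (Xa - Xb) \<le> r \<Longrightarrow> (\<And>i. i \<in> ?S \<Longrightarrow> \<bar>xa i - xb i\<bar> \<le> r) \<Longrightarrow>
      norm (particle_force (2 * k) cc e Dl a0 Da Xa xa - particle_force (2 * k) cc e Dl a0 Da Xb xb) \<le> KF * r"
    and V: "\<And>Xa Xb xa xb r j. norm (Xa - Xb) \<le> r \<Longrightarrow> (\<And>i. i \<in> ?S \<Longrightarrow> \<bar>xa i - xb i\<bar> \<le> r) \<Longrightarrow> j \<in> ?S \<Longrightarrow>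
      \<bar>Vop (2 * k) cc e (bath_displacement a0 Da Xa xa) j - Vop (2 * k) cc e (bath_displacement a0 Da Xb xb) j\<bar>
        \<le> KV * r"
    using vector_field_lipschitz[OF Dl_lip] by blast
  define L where "L = 2 + 2 * KF + 2 * real (card ?S) / m + 2 * real (card ?S) * KV"
  show thesis
  proof (rule that)
    fix Xa Pa xa pa Xb Pb xb pb and t :: real
    assume a: "hamilton_solution (2 * k) cc e m Dl a0 Da Xa Pa xa pa"
      and b: "hamilton_solution (2 * k) cc e m Dl a0 Da Xb Pb xb pb" and t: "t \<ge> 0"
    let ?D = "\<lambda>s. state_norm2 ?S (Xa s - Xb s) (Pa s - Pb s) (\<lambda>j. xa s j - xb s j) (\<lambda>j. pa s j - pb s j)"
    show "?D t \<le> exp (L * t) * ?D 0"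
      by (rule gronwall_exp_bound[OF DERIV_state_norm2_solution_diff[OF a b] _ t])
        (assumption, unfold L_def, rule state_norm2_rate_le[OF finite_lattice m KF KV F V],
         auto intro: components_le_sqrt_state_norm2[OF finite_lattice])
  qed
qed

lemma hamilton_solution_continuous_initial:
  fixes X P :: "'w::t2_space \<Rightarrow> real \<Rightarrow> real ^ 'N::finite"
    and x p :: "'w \<Rightarrow> real \<Rightarrow> site \<Rightarrow> real"
  assumes m: "m > 0" and Dl_lip: "\<And>Y Z u. \<bar>Dl Y u - Dl Z u\<bar> \<le> B * norm u * norm (Y - Z)"
    and sol: "\<And>w. hamilton_solution (2 * k) cc e m Dl a0 Da (X w) (P w) (x w) (p w)"
    and cont0: "continuous_on UNIV (\<lambda>w. X w 0)" "continuous_on UNIV (\<lambda>w. P w 0)"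
      "\<And>j. j \<in> lattice (2 * k) \<Longrightarrow> continuous_on UNIV (\<lambda>w. x w 0 j)"
      "\<And>j. j \<in> lattice (2 * k) \<Longrightarrow> continuous_on UNIV (\<lambda>w. p w 0 j)"
    and s: "s \<ge> 0"
  shows "continuous_on UNIV (\<lambda>w. X w s)" "continuous_on UNIV (\<lambda>w. P w s)"
    and "j \<in> lattice (2 * k) \<Longrightarrow> continuous_on UNIV (\<lambda>w. x w s j)"
proof -
  let ?S = "lattice (2 * k)"
  let ?D = "\<lambda>t w0 w. state_norm2 ?S (X w t - X w0 t) (P w t - P w0 t) (\<lambda>j. x w t j - x w0 t j) (\<lambda>j. p w t j - p w0 t j)"
  obtain L where L: "\<And>w0 w. ?D s w0 w \<le> exp (L * s) * ?D 0 w0 w"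
    by (rule hamilton_solution_stable[OF m Dl_lip], rule that) (use sol s in blast)
  define d where "d w0 w = sqrt (exp (L * s) * ?D 0 w0 w)" for w0 w
  have "((\<lambda>w. X w 0) \<longlongrightarrow> X w0 0) (at w0)" "((\<lambda>w. P w 0) \<longlongrightarrow> P w0 0) (at w0)"
    "j \<in> ?S \<Longrightarrow> ((\<lambda>w. x w 0 j) \<longlongrightarrow> x w0 0 j) (at w0)"
    "j \<in> ?S \<Longrightarrow> ((\<lambda>w. p w 0 j) \<longlongrightarrow> p w0 0 j) (at w0)" for w0 j
    using cont0 unfolding continuous_on_eq_continuous_at[OF open_UNIV] isCont_def by auto
  then have "(d w0 \<longlongrightarrow> sqrt (exp (L * s) * ?D 0 w0 w0)) (at w0)" for w0
    unfolding d_def state_norm2_def by (intro tendsto_intros) auto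
  then have d_lim: "(d w0 \<longlongrightarrow> 0) (at w0)" for w0
    by (simp add: state_norm2_def)
  have D_le_d: "sqrt (?D s w0 w) \<le> d w0 w" for w0 w
    unfolding d_def using L by simp
  note comp = components_le_sqrt_state_norm2[OF finite_lattice]
  show "continuous_on UNIV (\<lambda>w. X w s)"
    by (rule continuous_on_dominated[OF _ d_lim], rule order_trans[OF comp(1) D_le_d])
  show "continuous_on UNIV (\<lambda>w. P w s)"
    by (rule continuous_on_dominated[OF _ d_lim], rule order_trans[OF comp(2) D_le_d])
  show "continuous_on UNIV (\<lambda>w. x w s j)" if "j \<in> ?S"
    by (rule continuous_on_dominated[OF _ d_lim], unfold real_norm_def, rule order_trans[OF comp(3)[OF that] D_le_d])
qed

lemma continuous_on_particle_force:
  fixes Xw :: "'w::topological_space \<Rightarrow> real ^ 'N::finite" and xw :: "'w \<Rightarrow> site \<Rightarrow> real"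
  assumes Dl: "\<And>u. continuous_on UNIV (\<lambda>Y. Dl Y u)" and X: "continuous_on UNIV Xw"
    and x: "\<And>i. i \<in> lattice (2 * k) \<Longrightarrow> continuous_on UNIV (\<lambda>w. xw w i)"
  shows "continuous_on UNIV (\<lambda>w. particle_force (2 * k) cc e Dl a0 Da (Xw w) (xw w))"
proof -
  have Y: "continuous_on UNIV (\<lambda>w. bath_displacement a0 Da (Xw w) (xw w) i)" if "i \<in> lattice (2 * k)" for i
    unfolding bath_displacement_def using x[OF that] by (intro continuous_intros X)
  have "continuous_on UNIV (\<lambda>w. Vop (2 * k) cc e (bath_displacement a0 Da (Xw w) (xw w)) j)"
    if "j \<in> lattice (2 * k)" for j
    unfolding Vop_def by (intro continuous_intros Y that shift_in_lattice)
  moreover have "continuous_on UNIV (\<lambda>w. Dl (Xw w) u)" for u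
    by (rule continuous_on_compose2[OF Dl X]) auto
  ultimately show ?thesis
    unfolding particle_force_def by (intro continuous_intros)
qed

section \<open>The law of the initial bath data\<close>

lemma measurable_component_PiM_lborel:
  "(\<lambda>w::'i \<Rightarrow> real. w i) \<in> borel_measurable (PiM S (\<lambda>_. lborel))"
proof (cases "i \<in> S")
  case True
  then show ?thesis
    using measurable_component_singleton[of i S "\<lambda>_. lborel"] by simp
next
  case False
  then have "w i = undefined" if "w \<in> space (PiM S (\<lambda>_. lborel))" for w :: "'i \<Rightarrow> real"
    using that unfolding space_PiM PiE_def extensional_def by blast
  then show ?thesis
    by (subst measurable_cong[where g = "\<lambda>_. undefined"]) auto
qed

lemma borel_measurable_continuous_on_bath_init:
  fixes G :: "(site \<Rightarrow> real) \<times> (site \<Rightarrow> real) \<Rightarrow> 'b::topological_space"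
  assumes "continuous_on UNIV G"
  shows "G \<in> borel_measurable (bath_init nb cc e T m mu)"
proof -
  have "(\<lambda>w::site \<Rightarrow> real. w) \<in> borel_measurable (PiM S (\<lambda>_. lborel))" for S
    by (rule measurable_coordinatewise_then_product) (rule measurable_component_PiM_lborel)
  then have "(\<lambda>w. (fst w, snd w)) \<in> measurable (bath_init nb cc e T m mu) (borel \<Otimes>\<^sub>M borel)"
    unfolding bath_init_def gaussian_def
    by (intro measurable_Pair measurable_compose[OF measurable_fst] measurable_compose[OF measurable_snd]) simp_all
  then have "(\<lambda>w. w) \<in> borel_measurable (bath_init nb cc e T m mu)"
    by (simp add: borel_prod)
  then show ?thesis
    using measurable_comp[OF _ borel_measurable_continuous_onI[OF assms]] by (simp add: comp_def)
qed

text \<open>The total mass is Z / Z for the normalising integral Z, which is 1 unless Z is 0 or infinite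
  (junk values of ennreal division); Z is not evaluated here.\<close>

lemma emeasure_space_gaussian_le_1:
  assumes "(\<lambda>y. ennreal (exp (- Q y / 2))) \<in> borel_measurable (PiM S (\<lambda>_. lborel))"
  shows "emeasure (gaussian S Q) (space (gaussian S Q)) \<le> 1"
proof -
  let ?N = "PiM S (\<lambda>_. lborel) :: (site \<Rightarrow> real) measure"
  let ?Z = "\<integral>\<^sup>+ z. ennreal (exp (- Q z / 2)) \<partial>?N"
  have "emeasure (gaussian S Q) (space (gaussian S Q))
      = (\<integral>\<^sup>+ y. ennreal (exp (- Q y / 2)) / ?Z * indicator (space ?N) y \<partial>?N)"
    unfolding gaussian_def by (subst emeasure_density) (use assms in auto)
  also have "\<dots> = (\<integral>\<^sup>+ y. ennreal (exp (- Q y / 2)) / ?Z \<partial>?N)"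
    by (rule nn_integral_cong) auto
  also have "\<dots> = ?Z / ?Z"
    by (rule nn_integral_divide[OF assms])
  also have "\<dots> \<le> 1"
    by (rule ennreal_divide_self_le_1)
  finally show ?thesis .
qed

lemma emeasure_space_bath_init_le_1:
  "emeasure (bath_init nb cc e T m mu) (space (bath_init nb cc e T m mu)) \<le> 1"
proof -
  let ?M1 = "gaussian (lattice nb) (\<lambda>y. Vform nb cc e (\<lambda>j. y j - mu j) / T)"
  let ?M2 = "gaussian (lattice nb) (\<lambda>y. (\<Sum>j\<in>lattice nb. (y j)\<^sup>2) / (m * T))"
  note [measurable] = measurable_component_PiM_lborel
  have [measurable]: "(\<lambda>y. Vform nb cc e (\<lambda>j. y j - mu j) / T) \<in> borel_measurable (PiM (lattice nb) (\<lambda>_. lborel))"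
    unfolding Vform_def by measurable
  have M1: "emeasure ?M1 (space ?M1) \<le> 1" and M2: "emeasure ?M2 (space ?M2) \<le> 1"
    by (rule emeasure_space_gaussian_le_1, measurable)+
  then interpret M2: finite_measure ?M2
    by (intro finite_measureI) (auto simp: top_unique)
  have "emeasure (bath_init nb cc e T m mu) (space (bath_init nb cc e T m mu))
      = emeasure ?M1 (space ?M1) * emeasure ?M2 (space ?M2)"
    unfolding bath_init_def space_pair_measure by (rule M2.emeasure_pair_measure_Times) auto
  also have "\<dots> \<le> 1 * 1"
    by (intro mult_mono M1 M2) auto
  finally show ?thesis
    by simp
qed

section \<open>Moment bounds\<close>

lemma hamilton_solution_measurable:
  fixes X P :: "(site \<Rightarrow> real) \<times> (site \<Rightarrow> real) \<Rightarrow> real \<Rightarrow> real ^ 'N::finite"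
    and x p :: "(site \<Rightarrow> real) \<times> (site \<Rightarrow> real) \<Rightarrow> real \<Rightarrow> site \<Rightarrow> real"
  assumes m: "m > 0" and Dl_lip: "\<And>Y Z u. \<bar>Dl Y u - Dl Z u\<bar> \<le> B * norm u * norm (Y - Z)"
    and init: "\<And>w. X w 0 = X0 \<and> P w 0 = P0 \<and> (\<forall>j\<in>lattice (2 * k). x w 0 j = fst w j \<and> p w 0 j = snd w j)"
    and sol: "\<And>w. hamilton_solution (2 * k) cc e m Dl a0 Da (X w) (P w) (x w) (p w)"
    and s: "s \<ge> 0"
  shows "(\<lambda>w. X w s) \<in> borel_measurable (bath_init (2 * k) cc e T m mu)"
    and "(\<lambda>w. P w s) \<in> borel_measurable (bath_init (2 * k) cc e T m mu)"
    and "(\<lambda>w. particle_force (2 * k) cc e Dl a0 Da (X w s) (x w s)) \<in> borel_measurable (bath_init (2 * k) cc e T m mu)"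
proof -
  have "continuous_on UNIV (\<lambda>w::(site \<Rightarrow> real) \<times> (site \<Rightarrow> real). fst w j)"
    "continuous_on UNIV (\<lambda>w::(site \<Rightarrow> real) \<times> (site \<Rightarrow> real). snd w j)" for j
    by (rule continuous_on_compose2[OF continuous_on_product_coordinates continuous_on_fst[OF continuous_on_id]], simp)
      (rule continuous_on_compose2[OF continuous_on_product_coordinates continuous_on_snd[OF continuous_on_id]], simp)
  then have x0: "continuous_on UNIV (\<lambda>w. x w 0 j)" and p0: "continuous_on UNIV (\<lambda>w. p w 0 j)"
    if "j \<in> lattice (2 * k)" for j
    using init that by simp_all
  have X0: "continuous_on UNIV (\<lambda>w. X w 0)" and P0: "continuous_on UNIV (\<lambda>w. P w 0)"
    using init by simp_all
  note cont = hamilton_solution_continuous_initial[OF m Dl_lip sol X0 P0 x0 p0 s]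
  have "continuous_on UNIV (\<lambda>Y. Dl Y u)" for u :: "real ^ 'N"
  proof (rule continuous_on_dominated)
    show "norm (Dl Y u - Dl Y0 u) \<le> \<bar>B\<bar> * norm u * norm (Y - Y0)" for Y0 Y
      using Dl_lip[of Y u Y0] by (simp add: abs_mult_pos order_trans[OF _ mult_right_mono])
    show "((\<lambda>Y. \<bar>B\<bar> * norm u * norm (Y - Y0)) \<longlongrightarrow> 0) (at Y0)" for Y0 :: "real ^ 'N"
      by (auto intro!: tendsto_eq_intros)
  qed
  from continuous_on_particle_force[OF this cont(1,3)]
  show "(\<lambda>w. particle_force (2 * k) cc e Dl a0 Da (X w s) (x w s)) \<in> borel_measurable (bath_init (2 * k) cc e T m mu)"
    by (rule borel_measurable_continuous_on_bath_init)
  show "(\<lambda>w. X w s) \<in> borel_measurable (bath_init (2 * k) cc e T m mu)"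
    "(\<lambda>w. P w s) \<in> borel_measurable (bath_init (2 * k) cc e T m mu)"
    using cont(1,2) by (auto intro: borel_measurable_continuous_on_bath_init)
qed

lemma moment_bound_of_velocity_bound:
  fixes X P :: "(site \<Rightarrow> real) \<times> (site \<Rightarrow> real) \<Rightarrow> real \<Rightarrow> real ^ 'N::finite"
    and x p :: "(site \<Rightarrow> real) \<times> (site \<Rightarrow> real) \<Rightarrow> real \<Rightarrow> site \<Rightarrow> real"
    and k :: nat and cc e T m :: real and mu :: "site \<Rightarrow> real"
  defines "M \<equiv> bath_init (2 * k) cc e T m mu"
  assumes m: "m > 0" and Dl_lip: "\<And>Y Z u. \<bar>Dl Y u - Dl Z u\<bar> \<le> B * norm u * norm (Y - Z)"
    and init: "\<And>w. X w 0 = X0 \<and> P w 0 = P0 \<and> (\<forall>j\<in>lattice (2 * k). x w 0 j = fst w j \<and> p w 0 j = snd w j)"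
    and sol: "\<And>w. hamilton_solution (2 * k) cc e m Dl a0 Da (X w) (P w) (x w) (p w)"
    and vel: "(SUP s\<in>{0..t}. esqrt (\<integral>\<^sup>+ w. ennreal ((norm (vector_derivative (P w) (at s within {0..})))\<^sup>2) \<partial>M))
      + (SUP s\<in>{0..t}. esqrt (\<integral>\<^sup>+ w. ennreal ((norm (vector_derivative (X w) (at s within {0..})))\<^sup>2) \<partial>M))
      \<le> ennreal C"
  shows "(SUP s\<in>{0..t}. \<integral>\<^sup>+ w. ennreal ((norm (X w s))\<^sup>2 + (norm (P w s))\<^sup>2
      + (norm (vector_derivative (P w) (at s within {0..})))\<^sup>2) \<partial>M)
    \<le> ennreal (2 * (norm X0)\<^sup>2 + 2 * t^2 * C^2 + 2 * C^2)"
proof (rule SUP_least)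
  let ?F = "\<lambda>w v. particle_force (2 * k) cc e Dl a0 Da (X w v) (x w v)"
  note meas = hamilton_solution_measurable[OF m Dl_lip init sol, where T = T and mu = mu, folded M_def]
  have vdX: "vector_derivative (X w) (at v within {0..}) = P w v"
    and vdP: "vector_derivative (P w) (at v within {0..}) = ?F w v" if "v \<ge> 0" for w v
    using sol[of w] that by (auto simp: hamilton_solution_def intro: vector_derivative_within_atLeast)
  have vel_v: "esqrt (\<integral>\<^sup>+ w. ennreal ((norm (?F w v))\<^sup>2) \<partial>M)
      + esqrt (\<integral>\<^sup>+ w. ennreal ((norm (P w v))\<^sup>2) \<partial>M) \<le> ennreal C" if "v \<in> {0..t}" for v
    using order_trans[OF add_mono[OF SUP_upper[OF that] SUP_upper[OF that]] vel] that by (simp add: vdX vdP)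
  have EF: "(\<integral>\<^sup>+ w. ennreal ((norm (?F w v))\<^sup>2) \<partial>M) \<le> ennreal (C^2)" if "v \<in> {0..t}" for v
    by (rule esqrt_le_imp_le_power2, rule order_trans[OF add_increasing2[OF zero_le order_refl] vel_v[OF that]])
  have EP: "(\<integral>\<^sup>+ w. ennreal ((norm (P w v))\<^sup>2) \<partial>M) \<le> ennreal (C^2)" if "v \<in> {0..t}" for v
    by (rule esqrt_le_imp_le_power2, rule order_trans[OF add_increasing[OF zero_le order_refl] vel_v[OF that]])
  fix s assume s: "s \<in> {0..t}"
  have "(\<integral>\<^sup>+ w. ennreal ((norm (X w s))\<^sup>2) \<partial>M) \<le> ennreal (2 * (norm X0)\<^sup>2 + 2 * s^2 * C^2)"
  proof (rule nn_integral_norm_sq_le_of_derivative)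
    show "emeasure M (space M) \<le> 1"
      unfolding M_def by (rule emeasure_space_bath_init_le_1)
    show "(X w has_vector_derivative P w v) (at v within {0..s})" if "v \<in> {0..s}" for w v
      using sol[of w] that by (auto simp: hamilton_solution_def intro: has_vector_derivative_within_subset)
    show "continuous_on {0..s} (P w)" for w
    proof (rule continuous_on_vector_derivative)
      show "(P w has_vector_derivative ?F w v) (at v within {0..s})" if "v \<in> {0..s}" for v
        using sol[of w] that by (auto simp: hamilton_solution_def intro: has_vector_derivative_within_subset)
    qed
  qed (use s init meas EP in auto)
  also have "\<dots> \<le> ennreal (2 * (norm X0)\<^sup>2 + 2 * t^2 * C^2)"
    using s by (auto intro!: ennreal_leI mult_right_mono power_mono)
  finally have EX: "(\<integral>\<^sup>+ w. ennreal ((norm (X w s))\<^sup>2) \<partial>M) \<le> ennreal (2 * (norm X0)\<^sup>2 + 2 * t^2 * C^2)" .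
  have "(\<integral>\<^sup>+ w. ennreal ((norm (X w s))\<^sup>2 + (norm (P w s))\<^sup>2
        + (norm (vector_derivative (P w) (at s within {0..})))\<^sup>2) \<partial>M)
      = (\<integral>\<^sup>+ w. ennreal ((norm (X w s))\<^sup>2) \<partial>M) + (\<integral>\<^sup>+ w. ennreal ((norm (P w s))\<^sup>2) \<partial>M)
        + (\<integral>\<^sup>+ w. ennreal ((norm (?F w s))\<^sup>2) \<partial>M)"
    using s meas by (simp add: vdP nn_integral_add)
  also have "\<dots> \<le> ennreal (2 * (norm X0)\<^sup>2 + 2 * t^2 * C^2) + ennreal (C^2) + ennreal (C^2)"
    by (intro add_mono EX EP EF s)
  also have "\<dots> = ennreal (2 * (norm X0)\<^sup>2 + 2 * t^2 * C^2 + 2 * C^2)"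
    by (simp flip: ennreal_plus)
  finally show "(\<integral>\<^sup>+ w. ennreal ((norm (X w s))\<^sup>2 + (norm (P w s))\<^sup>2
        + (norm (vector_derivative (P w) (at s within {0..})))\<^sup>2) \<partial>M)
      \<le> ennreal (2 * (norm X0)\<^sup>2 + 2 * t^2 * C^2 + 2 * C^2)" .
qed

theorem lemma3p2:
  fixes X0 P0 :: "real ^ 'N::finite"
    and T m c :: real
    and eta :: "nat \<Rightarrow> real"
    and lam :: "real ^ 'N \<Rightarrow> real"
    and Dl :: "real ^ 'N \<Rightarrow> real ^ 'N \<Rightarrow> real"
    and D2l :: "real ^ 'N \<Rightarrow> real ^ 'N \<Rightarrow> real ^ 'N \<Rightarrow> real"
    and D3l :: "real ^ 'N \<Rightarrow> real ^ 'N \<Rightarrow> real ^ 'N \<Rightarrow> real ^ 'N \<Rightarrow> real"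
    and a0 :: "nat \<Rightarrow> site \<Rightarrow> real"
    and Da :: "nat \<Rightarrow> 'N \<Rightarrow> site \<Rightarrow> real"
    and lhat :: "'N \<Rightarrow> site"
    and Fbar :: "'N \<Rightarrow> site \<Rightarrow> real"
    and X P :: "nat \<Rightarrow> (site \<Rightarrow> real) \<times> (site \<Rightarrow> real) \<Rightarrow> real \<Rightarrow> real ^ 'N"
    and x p :: "nat \<Rightarrow> (site \<Rightarrow> real) \<times> (site \<Rightarrow> real) \<Rightarrow> real \<Rightarrow> site \<Rightarrow> real"
  assumes T_pos: "T > 0" and m_pos: "m > 0" and c_pos: "c > 0"
    and eta_pos: "\<forall>k\<ge>1. eta k > 0"
    and eta_lim: "eta \<longlonglongrightarrow> 0"
    and eta_lim2: "filterlim (\<lambda>k. sqrt (real ((2 * k) ^ 3)) * eta k) at_top sequentially"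
    \<comment> \<open>lambda is C^3 with bounded second and third derivatives\<close>
    and D1: "\<forall>Y. (lam has_derivative Dl Y) (at Y)"
    and D2: "\<forall>Y u. ((\<lambda>Z. Dl Z u) has_derivative D2l Y u) (at Y)"
    and D3: "\<forall>Y u v. ((\<lambda>Z. D2l Z u v) has_derivative D3l Y u v) (at Y)"
    and D3_cont: "\<forall>u v w. continuous_on UNIV (\<lambda>Z. D3l Z u v w)"
    and D2_bdd: "\<exists>B. \<forall>Y u v. \<bar>D2l Y u v\<bar> \<le> B * norm u * norm v"
    and D3_bdd: "\<exists>B. \<forall>Y u v w. \<bar>D3l Y u v w\<bar> \<le> B * norm u * norm v * norm w"
    \<comment> \<open>force derivatives F'_{l,j} = (V'' d_{X_l} a)_j: decay and limits\<close>
    and F_decay: "\<exists>B. \<forall>k\<ge>1. \<forall>l. (\<Sum>j\<in>lattice (2 * k).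
         \<bar>Vop (2 * k) c (eta k) (Da k l) j\<bar> * (1 + sitedist2 j (lhat l))) \<le> B"
    and F_lim: "\<forall>l j. (\<lambda>k. Vop (2 * k) c (eta k) (Da k l) j) \<longlonglongrightarrow> Fbar l j"
    and beta: "\<forall>l. \<exists>g :: real \<times> real \<times> real \<Rightarrow> complex.
         twice_differentiable_on g (cbox (-2*c, -2*c, -2*c) (2*c, 2*c, 2*c)) \<and>
         (\<forall>w\<in>cbox (-2*c, -2*c, -2*c) (2*c, 2*c, 2*c). norm w > c \<longrightarrow> g w = 0) \<and>
         (\<forall>r\<in>{-1/2..<1/2} \<times> {-1/2..<1/2} \<times> {-1/2..<1/2}.
            (\<Sum>\<^sub>\<infinity>j\<in>UNIV. complex_of_real (Fbar l j) * exp (- 2 * pi * \<i> * complex_of_real (dotZ j r)))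
              = g (omega c r))"
    \<comment> \<open>Hamilton equations with initial data (X0, P0, x_0, p_0) = (X0, P0, fst w, snd w)\<close>
    and ham: "\<forall>k\<ge>1. \<forall>w.
         X k w 0 = X0 \<and> P k w 0 = P0 \<and>
         (\<forall>j\<in>lattice (2 * k). x k w 0 j = fst w j \<and> p k w 0 j = snd w j) \<and>
         (\<forall>t\<ge>0.
            (X k w has_vector_derivative P k w t) (at t within {0..}) \<and>
            (P k w has_vector_derivative
               (\<chi> l. - Dl (X k w t) (axis l 1) +
                  (\<Sum>j\<in>lattice (2 * k). Da k l j *
                     Vop (2 * k) c (eta k)
                       (\<lambda>i. x k w t i - (a0 k i + (\<Sum>l'\<in>UNIV. X k w t $ l' * Da k l' i))) j)))
               (at t within {0..}) \<and>
            (\<forall>j\<in>lattice (2 * k).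
               ((\<lambda>s. x k w s j) has_real_derivative p k w t j / m) (at t within {0..}) \<and>
               ((\<lambda>s. p k w s j) has_real_derivative
                  - Vop (2 * k) c (eta k)
                      (\<lambda>i. x k w t i - (a0 k i + (\<Sum>l'\<in>UNIV. X k w t $ l' * Da k l' i))) j)
                  (at t within {0..})))"
    and hyp: "\<forall>t>0. \<exists>C. \<forall>k\<ge>1.
         (SUP s\<in>{0..t}. esqrt (\<integral>\<^sup>+ w. ennreal ((norm (vector_derivative (P k w) (at s within {0..})))\<^sup>2)
             \<partial>bath_init (2 * k) c (eta k) T m (\<lambda>i. a0 k i + (\<Sum>l\<in>UNIV. X0 $ l * Da k l i))))
       + (SUP s\<in>{0..t}. esqrt (\<integral>\<^sup>+ w. ennreal ((norm (vector_derivative (X k w) (at s within {0..})))\<^sup>2)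
             \<partial>bath_init (2 * k) c (eta k) T m (\<lambda>i. a0 k i + (\<Sum>l\<in>UNIV. X0 $ l * Da k l i))))
       \<le> ennreal C"
  shows "\<forall>t>0. \<exists>C. \<forall>k\<ge>1.
         (SUP s\<in>{0..t}. \<integral>\<^sup>+ w. ennreal ((norm (X k w s))\<^sup>2 + (norm (P k w s))\<^sup>2
               + (norm (vector_derivative (P k w) (at s within {0..})))\<^sup>2)
             \<partial>bath_init (2 * k) c (eta k) T m (\<lambda>i. a0 k i + (\<Sum>l\<in>UNIV. X0 $ l * Da k l i)))
       \<le> ennreal (C * (1 + exp (C * t ^ 4)))"
proof (intro allI impI)
  fix t :: real
  assume "t > 0"
  with hyp obtain C where vel: "\<forall>k\<ge>1.
         (SUP s\<in>{0..t}. esqrt (\<integral>\<^sup>+ w. ennreal ((norm (vector_derivative (P k w) (at s within {0..})))\<^sup>2)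
             \<partial>bath_init (2 * k) c (eta k) T m (\<lambda>i. a0 k i + (\<Sum>l\<in>UNIV. X0 $ l * Da k l i))))
       + (SUP s\<in>{0..t}. esqrt (\<integral>\<^sup>+ w. ennreal ((norm (vector_derivative (X k w) (at s within {0..})))\<^sup>2)
             \<partial>bath_init (2 * k) c (eta k) T m (\<lambda>i. a0 k i + (\<Sum>l\<in>UNIV. X0 $ l * Da k l i))))
       \<le> ennreal C"
    by blast
  obtain B where "\<And>Y u v. \<bar>D2l Y u v\<bar> \<le> B * norm u * norm v"
    using D2_bdd by blast
  with D2 have Dl_lip: "\<And>Y Z u. \<bar>Dl Y u - Dl Z u\<bar> \<le> B * norm u * norm (Y - Z)"
    by (intro lipschitz_of_bounded_derivative) auto
  define K where "K = 2 * (norm X0)\<^sup>2 + 2 * t^2 * C^2 + 2 * C^2"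
  have "(SUP s\<in>{0..t}. \<integral>\<^sup>+ w. ennreal ((norm (X k w s))\<^sup>2 + (norm (P k w s))\<^sup>2
               + (norm (vector_derivative (P k w) (at s within {0..})))\<^sup>2)
             \<partial>bath_init (2 * k) c (eta k) T m (\<lambda>i. a0 k i + (\<Sum>l\<in>UNIV. X0 $ l * Da k l i)))
       \<le> ennreal K" if k: "k \<ge> 1" for k
    unfolding K_def
  proof (rule moment_bound_of_velocity_bound[OF m_pos Dl_lip])
    show "X k w 0 = X0 \<and> P k w 0 = P0 \<and> (\<forall>j\<in>lattice (2 * k). x k w 0 j = fst w j \<and> p k w 0 j = snd w j)"
      "hamilton_solution (2 * k) c (eta k) m Dl (a0 k) (Da k) (X k w) (P k w) (x k w) (p k w)" for w
      using ham k unfolding hamilton_solution_def particle_force_def bath_displacement_def by blast+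
  qed (use vel k in blast)
  moreover have "K \<le> K * (1 + exp (K * t ^ 4))"
    unfolding K_def by (simp add: algebra_simps)
  ultimately show "\<exists>C. \<forall>k\<ge>1.
         (SUP s\<in>{0..t}. \<integral>\<^sup>+ w. ennreal ((norm (X k w s))\<^sup>2 + (norm (P k w s))\<^sup>2
               + (norm (vector_derivative (P k w) (at s within {0..})))\<^sup>2)
             \<partial>bath_init (2 * k) c (eta k) T m (\<lambda>i. a0 k i + (\<Sum>l\<in>UNIV. X0 $ l * Da k l i)))
       \<le> ennreal (C * (1 + exp (C * t ^ 4)))"
    by (intro exI[of _ K]) (auto intro: order_trans ennreal_leI)
qed

end
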